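(* Let $G$ be a non-regular simple graph on $n$ vertices, and let $u,v$ be vertices of $G$ with $d_G(u)<d_G(v)$. Let $R:=V(G)\setminus\{u,v\}$. If $F_k(G)$ is regular for some integer $k$ with $2\le k\le n-2$, then $d_R(u)=0$, i.e. $u$ has no neighbor in $R$.
   Context: For a simple graph $G=(V,E)$ on $n$ vertices and an integer $1\le k<n$, the $k$-token graph $F_k(G)$ is the graph whose vertices are all $k$-element subsets of $V$, two such subsets $A,B$ being adjacent whenever their symmetric difference $A\triangle B$ is a pair $\{a,b\}$ with $a$ adjacent to $b$ in $G$. For $X\subseteq V$ and $x\in V$, $d_X(x)$ is the number of neighbors of $x$ in $X$; $d_G(x)$ is the degree of $x$ in $G$. *)

theory Defs
  imports Main
begin

definition simple_graph :: "'a set \<Rightarrow> ('a \<Rightarrow> 'a \<Rightarrow> bool) \<Rightarrow> bool" where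
  "simple_graph V E \<longleftrightarrow> finite V \<and> (\<forall>x y. E x y \<longrightarrow> x \<in> V \<and> y \<in> V)
     \<and> (\<forall>x y. E x y \<longrightarrow> E y x) \<and> (\<forall>x. \<not> E x x)"

definition deg_in :: "('a \<Rightarrow> 'a \<Rightarrow> bool) \<Rightarrow> 'a set \<Rightarrow> 'a \<Rightarrow> nat" where
  "deg_in E X x = card {y \<in> X. E x y}"

definition degree :: "'a set \<Rightarrow> ('a \<Rightarrow> 'a \<Rightarrow> bool) \<Rightarrow> 'a \<Rightarrow> nat" where
  "degree V E x = deg_in E V x"

definition regular :: "'a set \<Rightarrow> ('a \<Rightarrow> 'a \<Rightarrow> bool) \<Rightarrow> bool" where
  "regular V E \<longleftrightarrow> (\<exists>r. \<forall>x\<in>V. degree V E x = r)"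

definition token_vertices :: "'a set \<Rightarrow> nat \<Rightarrow> 'a set set" where
  "token_vertices V k = {A. A \<subseteq> V \<and> card A = k}"

definition token_adj :: "('a \<Rightarrow> 'a \<Rightarrow> bool) \<Rightarrow> 'a set \<Rightarrow> 'a set \<Rightarrow> bool" where
  "token_adj E A B \<longleftrightarrow> (\<exists>a b. A - B \<union> (B - A) = {a, b} \<and> E a b)"

end

theory Submission imports Defs begin

(* The degree of a k-set A in F_k(G) is the number of edges of G leaving A. Comparing the
   k-sets S + u and S + v for a (k-1)-subset S of R, regularity of F_k(G) gives
   2 (d_S(v) - d_S(u)) = d(v) - d(u) > 0 for every such S. As 0 < k - 1 < |R|, exchanging
   one element of S shows that f(w) = [v ~ w] - [u ~ w] is constant on R; a neighbour x of u
   in R has f(x) <= 0, so d_S(v) - d_S(u) = sum of f over S would be <= 0. *)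

lemma deg_in_eq_sum:
  assumes "finite X"
  shows "deg_in E X x = (\<Sum>y\<in>X. of_bool (E x y))"
  using assms by (simp add: deg_in_def Collect_conj_eq Int_commute)

lemma deg_in_insert:
  assumes "finite X" "z \<notin> X"
  shows "deg_in E (insert z X) x = deg_in E X x + of_bool (E x z)"
  using assms by (simp add: deg_in_eq_sum)

lemma deg_in_Un_disjoint:
  assumes "finite X" "finite Y" "X \<inter> Y = {}"
  shows "deg_in E (X \<union> Y) x = deg_in E X x + deg_in E Y x"
proof -
  have "{y \<in> X \<union> Y. E x y} = {y \<in> X. E x y} \<union> {y \<in> Y. E x y}" by auto
  then show ?thesis using assms by (simp add: deg_in_def card_Un_disjoint disjoint_iff)
qed

lemma sym_diff_doubleton_same_card:
  assumes "finite A" "finite B" "card A = card B" "A - B \<union> (B - A) = {a, b}" "a \<noteq> b"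
  shows "(A - B = {a} \<and> B - A = {b}) \<or> (A - B = {b} \<and> B - A = {a})"
proof -
  have "card (A - B) = card (B - A)"
    using assms(1-3) card_Diff_subset_Int[of A B] card_Diff_subset_Int[of B A]
    by (simp add: Int_commute)
  moreover have "card (A - B) + card (B - A) = 2"
    using assms card_Un_disjoint[of "A - B" "B - A"] by (simp add: Diff_Int_distrib2 Int_commute)
  ultimately obtain x y where xy: "A - B = {x}" "B - A = {y}"
    by (metis card_1_singletonE add_self_div_2 one_add_one)
  hence "{x, y} = {a, b}" using assms(4) by auto
  thus ?thesis using xy assms(5) by (auto simp: doubleton_eq_iff)
qed

lemma inj_on_token_move:
  "inj_on (\<lambda>(a, b). insert b (A - {a})) (SIGMA a:A. {b. b \<notin> A \<and> P a b})"
proof (rule inj_onI, clarify)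
  fix a b a' b'
  assume "a \<in> A" "a' \<in> A" "b \<notin> A" "b' \<notin> A" and eq: "insert b (A - {a}) = insert b' (A - {a'})"
  then show "a = a' \<and> b = b'" by (metis Diff_iff insertCI insertE singletonD)
qed

lemma token_neighbours_eq_image:
  assumes g: "simple_graph V E" and A: "A \<subseteq> V" "card A = k"
  shows "{B \<in> token_vertices V k. token_adj E A B}
       = (\<lambda>(a, b). insert b (A - {a})) ` (SIGMA a:A. {b \<in> V - A. E a b})"
proof -
  have finA: "finite A" using A g finite_subset by (auto simp: simple_graph_def)
  show ?thesis
  proof (intro equalityI subsetI)
    fix B assume "B \<in> {B \<in> token_vertices V k. token_adj E A B}"
    then obtain a b where B: "B \<subseteq> V" "card B = k" and ab: "A - B \<union> (B - A) = {a, b}" "E a b"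
      by (auto simp: token_vertices_def token_adj_def)
    have "finite B" using B g finite_subset by (auto simp: simple_graph_def)
    moreover have "a \<noteq> b" using ab g by (auto simp: simple_graph_def)
    ultimately have "(A - B = {a} \<and> B - A = {b}) \<or> (A - B = {b} \<and> B - A = {a})"
      using sym_diff_doubleton_same_card[OF finA _ _ ab(1)] A B by simp
    then show "B \<in> (\<lambda>(a, b). insert b (A - {a})) ` (SIGMA a:A. {b \<in> V - A. E a b})"
    proof
      assume "A - B = {a} \<and> B - A = {b}"
      then have "B = insert b (A - {a})" "(a, b) \<in> (SIGMA a:A. {b \<in> V - A. E a b})"
        using ab B by auto
      then show ?thesis by force
    next
      assume "A - B = {b} \<and> B - A = {a}"
      then have "B = insert a (A - {b})" "(b, a) \<in> (SIGMA a:A. {b \<in> V - A. E a b})"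
        using ab B g by (auto simp: simple_graph_def)
      then show ?thesis by force
    qed
  next
    fix B assume "B \<in> (\<lambda>(a, b). insert b (A - {a})) ` (SIGMA a:A. {b \<in> V - A. E a b})"
    then obtain a b where B: "B = insert b (A - {a})" and ab: "a \<in> A" "b \<in> V" "b \<notin> A" "E a b"
      by auto
    have "k > 0" using ab A finA card_gt_0_iff by blast
    then have "card B = k" using B ab A finA by (simp add: card_Diff_singleton)
    moreover have "A - B \<union> (B - A) = {a, b}" using B ab by auto
    ultimately show "B \<in> {B \<in> token_vertices V k. token_adj E A B}"
      using B ab A by (auto simp: token_vertices_def token_adj_def)
  qed
qed

lemma degree_token_graph:
  assumes g: "simple_graph V E" and A: "A \<subseteq> V" "card A = k"
  shows "degree (token_vertices V k) (token_adj E) A = (\<Sum>a\<in>A. deg_in E (V - A) a)"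
proof -
  have finV: "finite V" using g by (simp add: simple_graph_def)
  have "degree (token_vertices V k) (token_adj E) A
      = card ((\<lambda>(a, b). insert b (A - {a})) ` (SIGMA a:A. {b \<in> V - A. E a b}))"
    using token_neighbours_eq_image[OF assms] by (simp add: degree_def deg_in_def)
  also have "\<dots> = card (SIGMA a:A. {b \<in> V - A. E a b})"
    by (rule card_image, rule inj_on_subset[OF inj_on_token_move[of A "\<lambda>a b. E a b"]]) auto
  also have "\<dots> = (\<Sum>a\<in>A. deg_in E (V - A) a)"
    using finV A finite_subset[OF A(1) finV] by (subst card_SigmaI) (auto simp: deg_in_def)
  finally show ?thesis .
qed

lemma sum_deg_in_compl_insert:
  assumes g: "simple_graph V E" and "S \<subseteq> V" "u \<in> V" "u \<notin> S"
  shows "(\<Sum>a\<in>insert u S. deg_in E (V - insert u S) a) + 2 * deg_in E S u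
       = (\<Sum>a\<in>S. deg_in E (V - S) a) + degree V E u"
proof -
  have finV: "finite V" and sym: "\<And>x y. E x y \<Longrightarrow> E y x" and irr: "\<And>x. \<not> E x x"
    using g by (auto simp: simple_graph_def)
  have finS: "finite S" using assms(2) finV finite_subset by blast
  define W where "W = V - insert u S"
  have finW: "finite W" "u \<notin> W" using finV by (auto simp: W_def)
  have compl: "V - S = insert u W" using assms(2-4) by (auto simp: W_def)
  have V: "V = S \<union> insert u W" "S \<inter> insert u W = {}" using assms(2-4) by (auto simp: W_def)
  have "S \<inter> {a. E a u} = {a \<in> S. E u a}" using sym by blast
  then have back_edges: "(\<Sum>a\<in>S. of_bool (E a u)) = deg_in E S u"
    using finS by (simp add: deg_in_def)
  have "(\<Sum>a\<in>S. deg_in E (V - S) a) = (\<Sum>a\<in>S. deg_in E W a + of_bool (E a u))"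
    using finW by (simp add: compl deg_in_insert)
  also have "\<dots> = (\<Sum>a\<in>S. deg_in E W a) + deg_in E S u"
    using back_edges by (simp only: sum.distrib)
  finally have "(\<Sum>a\<in>S. deg_in E (V - S) a) = (\<Sum>a\<in>S. deg_in E W a) + deg_in E S u" .
  moreover have "degree V E u = deg_in E S u + deg_in E W u"
    using finS finW V irr by (simp add: degree_def deg_in_Un_disjoint deg_in_insert)
  ultimately show ?thesis using finS assms(4) by (simp add: W_def)
qed

lemma token_regular_imp_degree_balance:
  assumes g: "simple_graph V E" and reg: "regular (token_vertices V k) (token_adj E)"
    and uv: "u \<in> V" "v \<in> V" and S: "S \<subseteq> V - {u, v}" "card S + 1 = k"
  shows "degree V E u + 2 * deg_in E S v = degree V E v + 2 * deg_in E S u"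
proof -
  obtain r where r: "\<And>A. A \<in> token_vertices V k \<Longrightarrow> degree (token_vertices V k) (token_adj E) A = r"
    using reg by (auto simp: regular_def)
  have finS: "finite S" using S g finite_subset by (auto simp: simple_graph_def)
  have "u \<notin> S" "v \<notin> S" using S by auto
  have "r + 2 * deg_in E S w = (\<Sum>a\<in>S. deg_in E (V - S) a) + degree V E w"
    if w: "w \<in> {u, v}" for w
  proof -
    have A: "insert w S \<subseteq> V" "card (insert w S) = k" using w uv S finS \<open>u \<notin> S\<close> \<open>v \<notin> S\<close> by auto
    then have "r = (\<Sum>a\<in>insert w S. deg_in E (V - insert w S) a)"
      using r[of "insert w S"] degree_token_graph[OF g A] by (simp add: token_vertices_def)
    then show ?thesis using sum_deg_in_compl_insert[OF g, of S w] w uv S by auto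
  qed
  from this[of u] this[of v] show ?thesis by simp
qed

lemma eq_if_subset_sums_const:
  fixes f :: "'a \<Rightarrow> 'b :: cancel_comm_monoid_add"
  assumes "finite R" "0 < m" "m < card R"
    and sums: "\<And>S. S \<subseteq> R \<Longrightarrow> card S = m \<Longrightarrow> sum f S = c"
    and "x \<in> R" "z \<in> R"
  shows "f x = f z"
proof (cases "x = z")
  case False
  have "m - 1 \<le> card (R - {x, z})" using assms False by (simp add: card_Diff_subset)
  then obtain T where T: "T \<subseteq> R - {x, z}" "card T = m - 1" "finite T"
    by (rule obtain_subset_with_card_n)
  have "f w + sum f T = c" if "w \<in> {x, z}" for w
  proof -
    have "insert w T \<subseteq> R" "w \<notin> T" using T that assms by auto
    moreover have "card (insert w T) = m" using T(2,3) \<open>w \<notin> T\<close> assms(2) by simp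
    ultimately show ?thesis using sums[of "insert w T"] T(3) by simp
  qed
  then show ?thesis by (metis add_right_cancel insertCI)
qed simp

theorem lemma4:
  fixes V :: "'a set" and E :: "'a \<Rightarrow> 'a \<Rightarrow> bool" and u v :: 'a and k :: nat
  assumes "simple_graph V E"
    and "\<not> regular V E"
    and "u \<in> V" and "v \<in> V"
    and "degree V E u < degree V E v"
    and "2 \<le> k" and "k \<le> card V - 2"
    and "regular (token_vertices V k) (token_adj E)"
  shows "deg_in E (V - {u, v}) u = 0"
proof (rule ccontr)
  assume "deg_in E (V - {u, v}) u \<noteq> 0"
  then have "{y \<in> V - {u, v}. E u y} \<noteq> {}" by (metis card.empty deg_in_def)
  then obtain x where x: "x \<in> V - {u, v}" "E u x" by blast
  define R where "R = V - {u, v}"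
  define f :: "'a \<Rightarrow> int" where "f w = of_bool (E v w) - of_bool (E u w)" for w
  have finR: "finite R" using assms(1) by (simp add: R_def simple_graph_def)
  have "u \<noteq> v" using assms(5) by auto
  then have "card R = card V - 2" using assms(3,4) finR by (auto simp: R_def card_Diff_subset)
  then have m: "0 < k - 1" "k - 1 < card R" using assms(6,7) by auto
  have balance: "2 * sum f S = int (degree V E v) - int (degree V E u)"
    if S: "S \<subseteq> R" "card S = k - 1" for S
  proof -
    have "finite S" using S finR finite_subset by blast
    then show ?thesis
      using token_regular_imp_degree_balance[OF assms(1,8,3,4), of S] S assms(6)
      by (simp add: R_def f_def deg_in_eq_sum sum_subtractf)
  qed
  have "sum f S = (int (degree V E v) - int (degree V E u)) div 2"
    if "S \<subseteq> R" "card S = k - 1" for S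
    by (simp add: balance[OF that, symmetric])
  then have "f w = f x" if "w \<in> R" for w
    using eq_if_subset_sums_const[OF finR m] that x(1) unfolding R_def by blast
  then have nonpos: "f w \<le> 0" if "w \<in> R" for w using x(2) that by (simp add: f_def)
  obtain S where S: "S \<subseteq> R" "card S = k - 1"
    using m by (meson less_imp_le obtain_subset_with_card_n)
  then have "sum f S \<le> 0" using nonpos by (meson subsetD sum_nonpos)
  then show False using balance[OF S] assms(5) by linarith
qed

end
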